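(* Let $r\ge 2$ and $m$ be integers with $0\le 2m\le r$, $n=2r-4m$, and let $f:S^2(S^r(\mathbb{C}^2))\to S^{n}(\mathbb{C}^2)$ be an $\mathfrak{sl}_2(\mathbb{C})$-equivariant linear map, written $f=\sum_{k=0}^n q_k w_k$. Let $k,i$ be integers with $0\le k\le r-2m$ and $0\le i\le r$, and let $j=2m+k-i$. Then $$q_k(x_ix_j)=q_{n-k}(x_{r-i}x_{r-j}),$$ with the convention $x_l=0$ for $l\notin[0,r]$.
   Context: $\mathfrak{sl}_2(\mathbb{C})$ has basis $X=\begin{pmatrix}0&1\\0&0\end{pmatrix}$, $H=\begin{pmatrix}1&0\\0&-1\end{pmatrix}$, $Y=\begin{pmatrix}0&0\\1&0\end{pmatrix}$, acting on the irreducible modules $S^d(\mathbb{C}^2)$. Let $x_0\in S^r(\mathbb{C}^2)$ be a highest weight vector and $x_i=Y^ix_0/i!$ ($0\le i\le r$), so $Yx_i=(i+1)x_{i+1}$, $Xx_i=(r-i+1)x_{i-1}$, $Hx_i=(r-2i)x_i$. Let $w_0\in S^n(\mathbb{C}^2)$ be a highest weight vector and $w_k=Y^kw_0/k!$ ($0\le k\le n$). Writing $f=\sum_{k=0}^n q_kw_k$ means $f(u)=\sum_k q_k(u)w_k$ for linear forms $q_k$ on $S^2(S^r(\mathbb{C}^2))$; $q_k(x_ix_j)$ is the value on the product $x_ix_j$. *)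

theory Defs
  imports Complex_Main
begin

text \<open>
  S^r(C^2) has basis x_0..x_r, S^n(C^2) has basis w_0..w_n, with the sl_2 actions
    Y x_i = (i+1) x_(i+1),  X x_i = (r-i+1) x_(i-1),  H x_i = (r-2i) x_i   (x_l = 0 for l outside [0,r]),
  and similarly for w_k with r replaced by n.  S^2(S^r(C^2)) is spanned by the products x_i x_j
  (x_i x_j = x_j x_i), on which sl_2 acts by derivations: Z(x_i x_j) = (Z x_i) x_j + x_i (Z x_j).
  A linear map f : S^2(S^r(C^2)) -> S^n(C^2), f = sum_k q_k w_k, is represented by the function
  q k i j = q_k(x_i x_j), i.e. the w_k-coordinate of f(x_i x_j).  It must be symmetric in i,j
  (x_i x_j = x_j x_i), and with the convention x_l = 0 (l outside [0,r]) and w_k = 0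
  (k outside [0,n]) it vanishes outside the index ranges.  Conversely every such q comes from a
  unique linear map, since the x_i x_j (i <= j) form a basis of S^2(S^r(C^2)).
\<close>

definition lin_map_rep :: "nat \<Rightarrow> nat \<Rightarrow> (int \<Rightarrow> int \<Rightarrow> int \<Rightarrow> complex) \<Rightarrow> bool" where
  "lin_map_rep r n q \<longleftrightarrow>
     (\<forall>k i j. q k i j = q k j i) \<and>
     (\<forall>k i j. \<not> (0 \<le> k \<and> k \<le> int n \<and> 0 \<le> i \<and> i \<le> int r \<and> 0 \<le> j \<and> j \<le> int r)
              \<longrightarrow> q k i j = 0)"

text \<open>Equivariance f(Z u) = Z f(u) for Z = Y, X, H, checked on the spanning products u = x_i x_j
  and compared coordinatewise in w_k (0 <= k <= n).\<close>

definition equivariant_Y :: "nat \<Rightarrow> nat \<Rightarrow> (int \<Rightarrow> int \<Rightarrow> int \<Rightarrow> complex) \<Rightarrow> bool" where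
  "equivariant_Y r n q \<longleftrightarrow>
     (\<forall>k i j. 0 \<le> k \<and> k \<le> int n \<and> 0 \<le> i \<and> i \<le> int r \<and> 0 \<le> j \<and> j \<le> int r \<longrightarrow>
        of_int (i+1) * q k (i+1) j + of_int (j+1) * q k i (j+1) = of_int k * q (k-1) i j)"

definition equivariant_X :: "nat \<Rightarrow> nat \<Rightarrow> (int \<Rightarrow> int \<Rightarrow> int \<Rightarrow> complex) \<Rightarrow> bool" where
  "equivariant_X r n q \<longleftrightarrow>
     (\<forall>k i j. 0 \<le> k \<and> k \<le> int n \<and> 0 \<le> i \<and> i \<le> int r \<and> 0 \<le> j \<and> j \<le> int r \<longrightarrow>
        of_int (int r - i + 1) * q k (i-1) j + of_int (int r - j + 1) * q k i (j-1)
          = of_int (int n - k) * q (k+1) i j)"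

definition equivariant_H :: "nat \<Rightarrow> nat \<Rightarrow> (int \<Rightarrow> int \<Rightarrow> int \<Rightarrow> complex) \<Rightarrow> bool" where
  "equivariant_H r n q \<longleftrightarrow>
     (\<forall>k i j. 0 \<le> k \<and> k \<le> int n \<and> 0 \<le> i \<and> i \<le> int r \<and> 0 \<le> j \<and> j \<le> int r \<longrightarrow>
        of_int ((int r - 2*i) + (int r - 2*j)) * q k i j = of_int (int n - 2*k) * q k i j)"

definition sl2_equivariant_map :: "nat \<Rightarrow> nat \<Rightarrow> (int \<Rightarrow> int \<Rightarrow> int \<Rightarrow> complex) \<Rightarrow> bool" where
  "sl2_equivariant_map r n q \<longleftrightarrow>
     lin_map_rep r n q \<and> equivariant_X r n q \<and> equivariant_Y r n q \<and> equivariant_H r n q"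

end

theory Submission
  imports Defs
begin

text \<open>
  An equivariant map with n + 2c = 2r is determined by the single coordinate q_0(x_0 x_c):
  the H-equations force q_0(x_i x_j) = 0 unless i + j = c, the Y-equations at k = 0 propagate
  q_0(x_0 x_c) along that anti-diagonal, and the X-equations determine q_(k+1) from q_k.
  The Weyl flip q_k(x_i x_j) \<mapsto> q_(n-k)(x_(r-i) x_(r-j)) is again equivariant, and it agrees
  with q at that coordinate: climbing with X from q_0(x_0 x_c) to q_s(x_0 x_r), s = r - c = n/2,
  multiplies by binomial(s,k)/binomial(n,k) along the way, and the same climb for the flip ends at
  q_s(x_r x_0), which equals q_s(x_0 x_r) by symmetry. So q equals its flip everywhere.
\<close>

lemma
  assumes "sl2_equivariant_map r n q"
  shows sl2_equivariant_map_sym: "q k i j = q k j i"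
    and sl2_equivariant_map_vanish:
      "\<not> (0 \<le> k \<and> k \<le> int n \<and> 0 \<le> i \<and> i \<le> int r \<and> 0 \<le> j \<and> j \<le> int r) \<Longrightarrow> q k i j = 0"
    and sl2_equivariant_map_X:
      "\<lbrakk>0 \<le> k; k \<le> int n; 0 \<le> i; i \<le> int r; 0 \<le> j; j \<le> int r\<rbrakk> \<Longrightarrow>
        of_int (int r - i + 1) * q k (i-1) j + of_int (int r - j + 1) * q k i (j-1)
          = of_int (int n - k) * q (k+1) i j"
    and sl2_equivariant_map_Y:
      "\<lbrakk>0 \<le> k; k \<le> int n; 0 \<le> i; i \<le> int r; 0 \<le> j; j \<le> int r\<rbrakk> \<Longrightarrow>
        of_int (i+1) * q k (i+1) j + of_int (j+1) * q k i (j+1) = of_int k * q (k-1) i j"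
    and sl2_equivariant_map_H:
      "\<lbrakk>0 \<le> k; k \<le> int n; 0 \<le> i; i \<le> int r; 0 \<le> j; j \<le> int r\<rbrakk> \<Longrightarrow>
        of_int ((int r - 2*i) + (int r - 2*j)) * q k i j = of_int (int n - 2*k) * q k i j"
  using assms
  unfolding sl2_equivariant_map_def lin_map_rep_def equivariant_X_def equivariant_Y_def
    equivariant_H_def
  by blast+

lemma sl2_equivariant_map_weight:
  assumes "sl2_equivariant_map r n q" and "q k i j \<noteq> 0"
  shows "(int r - 2*i) + (int r - 2*j) = int n - 2*k"
proof -
  have "0 \<le> k \<and> k \<le> int n \<and> 0 \<le> i \<and> i \<le> int r \<and> 0 \<le> j \<and> j \<le> int r"
    using sl2_equivariant_map_vanish[OF assms(1)] assms(2) by blast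
  then have "of_int ((int r - 2*i) + (int r - 2*j)) * q k i j = of_int (int n - 2*k) * q k i j"
    using sl2_equivariant_map_H[OF assms(1)] by blast
  with assms(2) show ?thesis
    by (metis mult_cancel_right of_int_eq_iff)
qed

lemma linear_eq_diff:
  fixes a b c A B C D E F :: "'a::comm_ring"
  assumes "a*A + b*C = c*E" and "a*B + b*D = c*F"
  shows "a*(A-B) + b*(C-D) = c*(E-F)"
  using assms by (simp add: algebra_simps)

lemma sl2_equivariant_map_diff:
  assumes q: "sl2_equivariant_map r n q" and p: "sl2_equivariant_map r n p"
  shows "sl2_equivariant_map r n (\<lambda>k i j. q k i j - p k i j)"
  unfolding sl2_equivariant_map_def lin_map_rep_def equivariant_X_def equivariant_Y_def
    equivariant_H_def
proof (intro conjI allI impI)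
  fix k i j :: int
  show "q k i j - p k i j = q k j i - p k j i"
    by (simp add: sl2_equivariant_map_sym[OF q] sl2_equivariant_map_sym[OF p])
  show "q k i j - p k i j = 0"
    if "\<not> (0 \<le> k \<and> k \<le> int n \<and> 0 \<le> i \<and> i \<le> int r \<and> 0 \<le> j \<and> j \<le> int r)"
    using that by (simp add: sl2_equivariant_map_vanish[OF q] sl2_equivariant_map_vanish[OF p])
  assume "0 \<le> k \<and> k \<le> int n \<and> 0 \<le> i \<and> i \<le> int r \<and> 0 \<le> j \<and> j \<le> int r"
  then have b: "0 \<le> k" "k \<le> int n" "0 \<le> i" "i \<le> int r" "0 \<le> j" "j \<le> int r" by auto
  show "of_int (int r - i + 1) * (q k (i-1) j - p k (i-1) j)
      + of_int (int r - j + 1) * (q k i (j-1) - p k i (j-1))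
      = of_int (int n - k) * (q (k+1) i j - p (k+1) i j)"
    by (rule linear_eq_diff[OF sl2_equivariant_map_X[OF q b] sl2_equivariant_map_X[OF p b]])
  show "of_int (i+1) * (q k (i+1) j - p k (i+1) j) + of_int (j+1) * (q k i (j+1) - p k i (j+1))
      = of_int k * (q (k-1) i j - p (k-1) i j)"
    by (rule linear_eq_diff[OF sl2_equivariant_map_Y[OF q b] sl2_equivariant_map_Y[OF p b]])
  show "of_int ((int r - 2*i) + (int r - 2*j)) * (q k i j - p k i j)
      = of_int (int n - 2*k) * (q k i j - p k i j)"
    using sl2_equivariant_map_H[OF q b] sl2_equivariant_map_H[OF p b]
    by (simp only: right_diff_distrib)
qed

text \<open>The action of the Weyl element, x_i \<mapsto> x_(r-i) and w_k \<mapsto> w_(n-k), on the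
  coordinates q_k(x_i x_j); it exchanges the roles of X and Y.\<close>

definition weyl_flip :: "nat \<Rightarrow> nat \<Rightarrow> (int \<Rightarrow> int \<Rightarrow> int \<Rightarrow> complex) \<Rightarrow> int \<Rightarrow> int \<Rightarrow> int \<Rightarrow> complex"
  where "weyl_flip r n q k i j = q (int n - k) (int r - i) (int r - j)"

lemma sl2_equivariant_map_weyl_flip:
  assumes q: "sl2_equivariant_map r n q"
  shows "sl2_equivariant_map r n (weyl_flip r n q)"
  unfolding sl2_equivariant_map_def lin_map_rep_def equivariant_X_def equivariant_Y_def
    equivariant_H_def
proof (intro conjI allI impI)
  fix k i j :: int
  show "weyl_flip r n q k i j = weyl_flip r n q k j i"
    by (simp add: weyl_flip_def sl2_equivariant_map_sym[OF q])
  show "weyl_flip r n q k i j = 0"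
    if "\<not> (0 \<le> k \<and> k \<le> int n \<and> 0 \<le> i \<and> i \<le> int r \<and> 0 \<le> j \<and> j \<le> int r)"
    unfolding weyl_flip_def by (rule sl2_equivariant_map_vanish[OF q]) (use that in linarith)
  assume "0 \<le> k \<and> k \<le> int n \<and> 0 \<le> i \<and> i \<le> int r \<and> 0 \<le> j \<and> j \<le> int r"
  then have b: "0 \<le> int n - k" "int n - k \<le> int n" "0 \<le> int r - i" "int r - i \<le> int r"
    "0 \<le> int r - j" "int r - j \<le> int r" by auto
  have shift: "int r - (i - 1) = int r - i + 1" "int r - (j - 1) = int r - j + 1"
    "int n - (k + 1) = int n - k - 1" "int r - (i + 1) = int r - i - 1"
    "int r - (j + 1) = int r - j - 1" "int n - (k - 1) = int n - k + 1"
    "int r - (int r - i) = i" "int r - (int r - j) = j" "int n - (int n - k) = k"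
    by simp_all
  show "of_int (int r - i + 1) * weyl_flip r n q k (i-1) j
      + of_int (int r - j + 1) * weyl_flip r n q k i (j-1)
      = of_int (int n - k) * weyl_flip r n q (k+1) i j"
    using sl2_equivariant_map_Y[OF q b] by (simp only: weyl_flip_def shift)
  show "of_int (i+1) * weyl_flip r n q k (i+1) j + of_int (j+1) * weyl_flip r n q k i (j+1)
      = of_int k * weyl_flip r n q (k-1) i j"
    using sl2_equivariant_map_X[OF q b] by (simp only: weyl_flip_def shift)
  have "of_int (- ((int r - 2*i) + (int r - 2*j))) * weyl_flip r n q k i j
      = of_int (- (int n - 2*k)) * weyl_flip r n q k i j"
    using sl2_equivariant_map_H[OF q b] unfolding weyl_flip_def
    by (simp add: algebra_simps)
  then show "of_int ((int r - 2*i) + (int r - 2*j)) * weyl_flip r n q k i j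
      = of_int (int n - 2*k) * weyl_flip r n q k i j"
    by (simp only: of_int_minus mult_minus_left minus_equation_iff minus_minus)
qed

lemma sl2_equivariant_map_eq_0_of_lowest:
  assumes q: "sl2_equivariant_map r n q" and lowest: "\<And>i j. q 0 i j = 0"
  shows "q k i j = 0"
proof (cases "0 \<le> k")
  case False
  then show ?thesis by (simp add: sl2_equivariant_map_vanish[OF q])
next
  case True
  have "q (int t) i j = 0" for t i j
  proof (induction t arbitrary: i j)
    case 0
    then show ?case by (simp add: lowest)
  next
    case (Suc t)
    show ?case
    proof (cases "int t < int n \<and> 0 \<le> i \<and> i \<le> int r \<and> 0 \<le> j \<and> j \<le> int r")
      case False
      then show ?thesis by (auto intro: sl2_equivariant_map_vanish[OF q])
    next
      case True
      then have "of_int (int n - int t) * q (int t + 1) i j = 0"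
        using sl2_equivariant_map_X[OF q, of "int t" i j] Suc.IH by simp
      moreover have "(of_int (int n - int t) :: complex) \<noteq> 0"
        using True by simp
      ultimately show ?thesis by (simp add: add.commute)
    qed
  qed
  from this[of "nat k"] True show ?thesis by simp
qed

lemma sl2_equivariant_map_lowest_eq_0:
  assumes q: "sl2_equivariant_map r n q" and weight: "n + 2 * c = 2 * r"
    and top: "q 0 0 (int c) = 0"
  shows "q 0 i j = 0"
proof -
  have diagonal: "q 0 (int a) (int c - int a) = 0" for a
  proof (induction a)
    case 0
    then show ?case using top by simp
  next
    case (Suc a)
    show ?case
    proof (cases "int a < int c")
      case False
      then show ?thesis by (simp add: sl2_equivariant_map_vanish[OF q])
    next
      case True
      then have "of_int (int a + 1) * q 0 (int a + 1) (int c - int a - 1) = 0"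
        using sl2_equivariant_map_Y[OF q, of 0 "int a" "int c - int a - 1"] Suc.IH weight
        by simp
      moreover have "(of_int (int a + 1) :: complex) \<noteq> 0"
        by (metis of_int_of_nat_eq of_nat_Suc of_nat_neq_0 add.commute)
      ultimately show ?thesis by (simp add: add.commute diff_diff_eq)
    qed
  qed
  show ?thesis
  proof (cases "q 0 i j = 0")
    case False
    have "j = int c - i"
      using sl2_equivariant_map_weight[OF q False] weight by linarith
    moreover have "0 \<le> i"
      using False sl2_equivariant_map_vanish[OF q] by force
    ultimately show ?thesis using diagonal[of "nat i"] by simp
  qed
qed

lemma of_nat_Suc_times_binomial:
  "(of_nat (Suc k) :: 'a::comm_semiring_1) * of_nat (n choose Suc k) = of_nat (n - k) * of_nat (n choose k)"
  by (simp only: of_nat_mult[symmetric] binomial_absorption binomial_absorb_comp)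

lemma sl2_equivariant_map_lowest_row:
  assumes q: "sl2_equivariant_map r n q" and r: "r = c + s" and "s \<le> n" and "t \<le> s"
  shows "of_nat (n choose t) * q (int t) 0 (int (c + t)) = of_nat (s choose t) * q 0 0 (int c)"
  using \<open>t \<le> s\<close>
proof (induction t)
  case 0
  then show ?case by simp
next
  case (Suc t)
  have X: "of_nat (s - t) * q (int t) 0 (int (c + t)) = of_nat (n - t) * q (int (Suc t)) 0 (int (c + Suc t))"
    using sl2_equivariant_map_X[OF q, of "int t" 0 "int (c + Suc t)"]
      sl2_equivariant_map_vanish[OF q, of "int t" "-1"] Suc.prems r \<open>s \<le> n\<close>
    by (simp add: of_nat_diff add_ac)
  have "of_nat (Suc t) * (of_nat (n choose Suc t) * q (int (Suc t)) 0 (int (c + Suc t)))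
      = of_nat (n choose t) * (of_nat (n - t) * q (int (Suc t)) 0 (int (c + Suc t)))"
    by (simp only: mult.assoc[symmetric] of_nat_Suc_times_binomial) (simp only: ac_simps)
  also have "\<dots> = of_nat (s - t) * (of_nat (n choose t) * q (int t) 0 (int (c + t)))"
    by (subst X[symmetric]) (simp only: ac_simps)
  also have "\<dots> = of_nat (Suc t) * (of_nat (s choose Suc t) * q 0 0 (int c))"
    using Suc by (simp only: mult.assoc[symmetric] of_nat_Suc_times_binomial)
  finally show ?case
    by (simp only: mult_left_cancel of_nat_neq_0 not_False_eq_True)
qed

lemma sl2_equivariant_map_weyl_flip_lowest:
  assumes q: "sl2_equivariant_map r n q" and weight: "n + 2 * c = 2 * r"
  shows "weyl_flip r n q 0 0 (int c) = q 0 0 (int c)"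
proof -
  define s where "s = r - c"
  have r: "r = c + s" and n: "n = s + s"
    using weight unfolding s_def by simp_all
  have "of_nat (n choose s) * q (int s) 0 (int (c + s)) = q 0 0 (int c)"
    using sl2_equivariant_map_lowest_row[OF q r, of s] n by simp
  moreover have "of_nat (n choose s) * weyl_flip r n q (int s) 0 (int (c + s)) = weyl_flip r n q 0 0 (int c)"
    using sl2_equivariant_map_lowest_row[OF sl2_equivariant_map_weyl_flip[OF q] r, of s] n by simp
  moreover have "weyl_flip r n q (int s) 0 (int (c + s)) = q (int s) 0 (int (c + s))"
    unfolding weyl_flip_def using sl2_equivariant_map_sym[OF q] r n by simp
  ultimately show ?thesis by simp
qed

theorem mainTheorem4:
  fixes r m n :: nat and q :: "int \<Rightarrow> int \<Rightarrow> int \<Rightarrow> complex" and k i j :: int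
  assumes "r \<ge> 2" and "2 * m \<le> r" and "n = 2 * r - 4 * m"
    and "sl2_equivariant_map r n q"
    and "0 \<le> k" and "k \<le> int r - 2 * int m"
    and "0 \<le> i" and "i \<le> int r"
    and "j = 2 * int m + k - i"
  shows "q k i j = q (int n - k) (int r - i) (int r - j)"
proof -
  define d where "d = (\<lambda>k i j. q k i j - weyl_flip r n q k i j)"
  have d: "sl2_equivariant_map r n d"
    unfolding d_def
    using sl2_equivariant_map_diff sl2_equivariant_map_weyl_flip assms(4) by blast
  have weight: "n + 2 * (2 * m) = 2 * r"
    using assms(2,3) by simp
  have "d 0 0 (int (2 * m)) = 0"
    unfolding d_def using sl2_equivariant_map_weyl_flip_lowest[OF assms(4) weight] by simp
  then have "d 0 i j = 0" for i j
    by (rule sl2_equivariant_map_lowest_eq_0[OF d weight])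
  then have "d k i j = 0"
    by (rule sl2_equivariant_map_eq_0_of_lowest[OF d])
  then show ?thesis
    unfolding d_def weyl_flip_def by simp
qed

end
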